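(* Let $G$ be a group with finite generating set $S$, let $\Gamma=Cay(G,S)$, and let $k,m>0$. Then $\Gamma$ is $\varepsilon$-densely $(k,m)$-chordal for some $\varepsilon>0$ if and only if $G$ is $(i_0,k,m)$-chordal with respect to $S$ for some $i_0>0$.
   Context: $S^{\pm1}=S\cup S^{-1}\setminus\{e\}$; $Cay(G,S)$ has vertex set $G$, edges $\{g,gs\}$ ($s\in S^{\pm1}$), each edge isometric to $[0,1]$. A cycle in a graph is a simple closed path (of length at least 3); $L(\cdot)$ denotes length and $d_\gamma$ the length metric on the cycle $\gamma$. A shortcut in $\gamma$ is a path $\sigma$ joining vertices $p,q$ of $\gamma$ with $L(\sigma)<d_\gamma(p,q)$; it is strict if $\sigma\cap\gamma=\{p,q\}$, and then $p,q$ are its associated shortcut vertices. A graph is $\varepsilon$-densely $(k,m)$-chordal if for every cycle $\gamma$ with $L(\gamma)\ge k$ there are strict shortcuts $\sigma_1,\dots,\sigma_r$ with $L(\sigma_i)\le m$ whose associated shortcut vertices form an $\varepsilon$-dense subset of $(\gamma,d_\gamma)$ (every point of $\gamma$ is at $d_\gamma$-distance $<\varepsilon$ from one of them). A relation $s_1\cdots s_n=e$ with $n>2$, $s_i\in S^{\pm1}$, is simple if $s_ps_{p+1}\cdots s_q=e$ holds exactly when $(p,q)=(1,n)$. $G$ is $(i_0,k,m)$-chordal with respect to $S$ if for every simple relation $s_1\cdots s_n=e$ with $n\ge k$ there exist $1\le i\le i_0$, $i<j\le n$ and $s'_1,\dots,s'_r\in S^{\pm1}$ with $s_i\cdots s_j=s'_1\cdots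 s'_r$ and $r\le\min\{m,\,j-i,\,n-j+i-2\}$. *)

theory Defs
  imports Complex_Main "HOL-Algebra.Group" "HOL-Algebra.Generated_Groups"
begin

definition sym_gens :: "('a, 'b) monoid_scheme \<Rightarrow> 'a set \<Rightarrow> 'a set" where
  "sym_gens G S = (S \<union> (\<lambda>s. inv\<^bsub>G\<^esub> s) ` S) - {\<one>\<^bsub>G\<^esub>}"

definition cay_adj :: "('a, 'b) monoid_scheme \<Rightarrow> 'a set \<Rightarrow> 'a \<Rightarrow> 'a \<Rightarrow> bool" where
  "cay_adj G S g h \<longleftrightarrow> g \<in> carrier G \<and> (\<exists>s \<in> sym_gens G S. h = g \<otimes>\<^bsub>G\<^esub> s)"

definition cay_cycle :: "('a, 'b) monoid_scheme \<Rightarrow> 'a set \<Rightarrow> 'a list \<Rightarrow> bool" where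
  "cay_cycle G S cs \<longleftrightarrow> length cs \<ge> 3 \<and> distinct cs \<and>
     (\<forall>i < length cs. cay_adj G S (cs ! i) (cs ! ((i + 1) mod length cs)))"

text \<open>An edge path (walk) in the Cayley graph, given by its vertex list; its length is
  the number of edges, i.e. length ws - 1.\<close>
definition cay_walk :: "('a, 'b) monoid_scheme \<Rightarrow> 'a set \<Rightarrow> 'a list \<Rightarrow> bool" where
  "cay_walk G S ws \<longleftrightarrow> ws \<noteq> [] \<and> hd ws \<in> carrier G \<and>
     (\<forall>i. i + 1 < length ws \<longrightarrow> cay_adj G S (ws ! i) (ws ! (i + 1)))"

text \<open>The length metric on a cycle of length n, whose points are parametrised by
  t \<in> [0,n), vertex number i sitting at parameter i.\<close>
definition cyc_dist :: "nat \<Rightarrow> real \<Rightarrow> real \<Rightarrow> real" where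
  "cyc_dist n s t = min \<bar>s - t\<bar> (real n - \<bar>s - t\<bar>)"

definition strict_shortcut ::
  "('a, 'b) monoid_scheme \<Rightarrow> 'a set \<Rightarrow> 'a list \<Rightarrow> nat \<Rightarrow> nat \<Rightarrow> 'a list \<Rightarrow> bool" where
  "strict_shortcut G S cs i j ws \<longleftrightarrow>
     i < length cs \<and> j < length cs \<and> cay_walk G S ws \<and>
     hd ws = cs ! i \<and> last ws = cs ! j \<and>
     real (length ws - 1) < cyc_dist (length cs) (real i) (real j) \<and>
     (\<forall>l. 0 < l \<and> l + 1 < length ws \<longrightarrow> ws ! l \<notin> set cs - {cs ! i, cs ! j})"

definition dense_chordal ::
  "('a, 'b) monoid_scheme \<Rightarrow> 'a set \<Rightarrow> real \<Rightarrow> nat \<Rightarrow> nat \<Rightarrow> bool" where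
  "dense_chordal G S \<epsilon> k m \<longleftrightarrow>
     (\<forall>cs. cay_cycle G S cs \<and> length cs \<ge> k \<longrightarrow>
        (\<forall>t::real. 0 \<le> t \<and> t < real (length cs) \<longrightarrow>
           (\<exists>i j ws. strict_shortcut G S cs i j ws \<and> length ws - 1 \<le> m \<and>
              (cyc_dist (length cs) t (real i) < \<epsilon> \<or> cyc_dist (length cs) t (real j) < \<epsilon>))))"

definition word_prod :: "('a, 'b) monoid_scheme \<Rightarrow> 'a list \<Rightarrow> 'a" where
  "word_prod G ws = foldr (\<lambda>x y. x \<otimes>\<^bsub>G\<^esub> y) ws \<one>\<^bsub>G\<^esub>"

text \<open>Subword s_p ... s_q (1-based, inclusive).\<close>
definition subword :: "'a list \<Rightarrow> nat \<Rightarrow> nat \<Rightarrow> 'a list" where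
  "subword ws p q = take (q + 1 - p) (drop (p - 1) ws)"

definition simple_relation :: "('a, 'b) monoid_scheme \<Rightarrow> 'a set \<Rightarrow> 'a list \<Rightarrow> bool" where
  "simple_relation G S ss \<longleftrightarrow> length ss > 2 \<and> set ss \<subseteq> sym_gens G S \<and>
     (\<forall>p q. 1 \<le> p \<and> p \<le> q \<and> q \<le> length ss \<longrightarrow>
        (word_prod G (subword ss p q) = \<one>\<^bsub>G\<^esub> \<longleftrightarrow> (p = 1 \<and> q = length ss)))"

definition group_chordal ::
  "('a, 'b) monoid_scheme \<Rightarrow> 'a set \<Rightarrow> nat \<Rightarrow> nat \<Rightarrow> nat \<Rightarrow> bool" where
  "group_chordal G S i0 k m \<longleftrightarrow>
     (\<forall>ss. simple_relation G S ss \<and> length ss \<ge> k \<longrightarrow>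
        (\<exists>i j ss'. 1 \<le> i \<and> i \<le> i0 \<and> i < j \<and> j \<le> length ss \<and>
           set ss' \<subseteq> sym_gens G S \<and>
           word_prod G (subword ss i j) = word_prod G ss' \<and>
           length ss' \<le> m \<and> length ss' \<le> j - i \<and>
           int (length ss') \<le> int (length ss) - int j + int i - 2))"

end

theory Submission
  imports Defs
begin

text \<open>A simple relation \<open>s\<^sub>1 \<cdots> s\<^sub>n = e\<close> is the same thing as a cycle of length \<open>n\<close>
  in the Cayley graph, the cycle of its prefix products; conversely, the labels read around a
  cycle from any vertex form a simple relation. Under this dictionary a relator
  \<open>s\<^sub>i \<cdots> s\<^sub>j = s'\<^sub>1 \<cdots> s'\<^sub>r\<close> with \<open>r \<le> j - i\<close> and \<open>r \<le> n - j + i - 2\<close> is a walk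
  between two vertices of the cycle that is shorter than their distance along the cycle, and such
  a walk contains a strict shortcut starting at most its own length away from its start. Hence
  shortcut vertices near the point \<open>\<epsilon>\<close> of the cycle of a relation give relators with
  \<open>i \<le> \<lceil>2\<epsilon>\<rceil> + 1\<close>, and conversely relators with \<open>i \<le> i\<^sub>0\<close>, read from the vertex
  \<open>\<lfloor>t\<rfloor>\<close>, give strict shortcuts with a vertex within \<open>i\<^sub>0 + m + 1\<close> of the point \<open>t\<close>.\<close>

lemma cyc_dist_commute: "cyc_dist n s t = cyc_dist n t s"
  unfolding cyc_dist_def by (simp add: abs_minus_commute)

lemma cyc_dist_self [simp]: "cyc_dist n s s = 0"
  unfolding cyc_dist_def by simp

lemma cyc_dist_le_abs: "cyc_dist n s t \<le> \<bar>s - t\<bar>"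
  unfolding cyc_dist_def by simp

lemma cyc_dist_nonneg:
  assumes "0 \<le> s" "s < real n" "0 \<le> t" "t < real n"
  shows "0 \<le> cyc_dist n s t"
  using assms unfolding cyc_dist_def by auto

lemma cyc_dist_triangle:
  assumes "0 \<le> x" "x < real n" "0 \<le> y" "y < real n" "0 \<le> z" "z < real n"
  shows "cyc_dist n x z \<le> cyc_dist n x y + cyc_dist n y z"
  using assms unfolding cyc_dist_def min_def by (auto split: if_splits simp: abs_if)

lemma cyc_dist_mod:
  assumes "D < n"
  shows "cyc_dist n (real (x mod n)) (real ((x + D) mod n)) = real (min D (n - D))"
proof -
  define a where "a = x mod n"
  have "a < n" using assms unfolding a_def by simp
  have "(x + D) mod n = (a + D) mod n" unfolding a_def by (simp add: mod_add_left_eq)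
  moreover have "(a + D) mod n = (if a + D < n then a + D else a + D - n)"
    using \<open>a < n\<close> assms by (simp add: le_mod_geq)
  ultimately show ?thesis
    using \<open>a < n\<close> assms unfolding cyc_dist_def a_def[symmetric]
    by (auto simp: min_def)
qed

lemma mod_add_eq_mod_add_iff:
  fixes x y n r :: nat
  assumes "x < y" "y \<le> n"
  shows "(r + x) mod n = (r + y) mod n \<longleftrightarrow> x = 0 \<and> y = n"
proof
  assume "(r + x) mod n = (r + y) mod n"
  then have "n dvd (r + y) - (r + x)"
    using assms by (metis mod_eq_dvd_iff_nat add_le_cancel_left less_imp_le)
  then have "n dvd y - x" by simp
  moreover have "0 < y - x" "y - x \<le> n" using assms by auto
  ultimately have "y - x = n" by (meson dvd_imp_le le_antisym)
  then show "x = 0 \<and> y = n" using assms by auto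
qed auto

definition walk_labels :: "('a, 'b) monoid_scheme \<Rightarrow> 'a list \<Rightarrow> 'a list" where
  "walk_labels G ws = map (\<lambda>l. inv\<^bsub>G\<^esub> (ws ! l) \<otimes>\<^bsub>G\<^esub> ws ! Suc l) [0..<length ws - 1]"

lemma length_walk_labels [simp]: "length (walk_labels G ws) = length ws - 1"
  unfolding walk_labels_def by simp

definition word_walk :: "('a, 'b) monoid_scheme \<Rightarrow> 'a \<Rightarrow> 'a list \<Rightarrow> 'a list" where
  "word_walk G g w = map (\<lambda>l. g \<otimes>\<^bsub>G\<^esub> word_prod G (take l w)) [0..<Suc (length w)]"

lemma word_walk_nth:
  "l \<le> length w \<Longrightarrow> word_walk G g w ! l = g \<otimes>\<^bsub>G\<^esub> word_prod G (take l w)"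
  unfolding word_walk_def by (simp del: upt_Suc add: nth_map_upt)

lemma length_word_walk [simp]: "length (word_walk G g w) = Suc (length w)"
  unfolding word_walk_def by simp

lemma word_walk_not_Nil [simp]: "word_walk G g w \<noteq> []"
  unfolding word_walk_def by simp

definition relation_cycle :: "('a, 'b) monoid_scheme \<Rightarrow> 'a list \<Rightarrow> 'a list" where
  "relation_cycle G ss = map (\<lambda>l. word_prod G (take l ss)) [0..<length ss]"

lemma relation_cycle_nth:
  "l < length ss \<Longrightarrow> relation_cycle G ss ! l = word_prod G (take l ss)"
  unfolding relation_cycle_def by simp

lemma length_relation_cycle [simp]: "length (relation_cycle G ss) = length ss"
  unfolding relation_cycle_def by simp

definition cycle_walk :: "'a list \<Rightarrow> nat \<Rightarrow> 'a list" where
  "cycle_walk cs r = map (\<lambda>l. cs ! ((r + l) mod length cs)) [0..<Suc (length cs)]"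

lemma cycle_walk_nth:
  "l \<le> length cs \<Longrightarrow> cycle_walk cs r ! l = cs ! ((r + l) mod length cs)"
  unfolding cycle_walk_def by (simp del: upt_Suc add: nth_map_upt)

lemma length_cycle_walk [simp]: "length (cycle_walk cs r) = Suc (length cs)"
  unfolding cycle_walk_def by simp

lemma first_return:
  assumes "length xs \<ge> 2" "last xs \<in> A"
  obtains q where "0 < q" "q < length xs" "xs ! q \<in> A"
    "\<forall>l. 0 < l \<and> l < q \<longrightarrow> xs ! l \<notin> A"
proof -
  let ?returns = "\<lambda>l. 0 < l \<and> xs ! l \<in> A"
  have "xs \<noteq> []" using assms(1) by auto
  then have "?returns (length xs - 1)" using assms by (simp add: last_conv_nth)
  then obtain q where "q \<le> length xs - 1" "?returns q" "\<forall>l<q. \<not> ?returns l"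
    using ex_least_nat_le[of ?returns "length xs - 1"] by auto
  with assms(1) show thesis by (intro that) auto
qed

locale cayley_graph = group G for G :: "('a, 'b) monoid_scheme" (structure) +
  fixes S :: "'a set"
  assumes gens_closed: "S \<subseteq> carrier G"
begin

lemma sym_gens_closed: "sym_gens G S \<subseteq> carrier G"
  using gens_closed unfolding sym_gens_def by auto

lemma sym_gens_inv: "s \<in> sym_gens G S \<Longrightarrow> inv s \<in> sym_gens G S"
  using gens_closed unfolding sym_gens_def by (auto simp: subset_iff)

lemma cay_adj_iff:
  "cay_adj G S g h \<longleftrightarrow> g \<in> carrier G \<and> h \<in> carrier G \<and> inv g \<otimes> h \<in> sym_gens G S"
proof
  assume "cay_adj G S g h"
  then obtain s where "g \<in> carrier G" "s \<in> sym_gens G S" "h = g \<otimes> s"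
    unfolding cay_adj_def by blast
  moreover have "s \<in> carrier G" using \<open>s \<in> sym_gens G S\<close> sym_gens_closed by blast
  ultimately show "g \<in> carrier G \<and> h \<in> carrier G \<and> inv g \<otimes> h \<in> sym_gens G S"
    by (simp add: m_assoc[symmetric])
next
  assume "g \<in> carrier G \<and> h \<in> carrier G \<and> inv g \<otimes> h \<in> sym_gens G S"
  then show "cay_adj G S g h"
    unfolding cay_adj_def by (intro conjI bexI[of _ "inv g \<otimes> h"]) (auto simp: m_assoc[symmetric])
qed

lemma word_prod_closed: "set xs \<subseteq> carrier G \<Longrightarrow> word_prod G xs \<in> carrier G"
  unfolding word_prod_def by (induction xs) auto

lemma word_prod_append:
  "set xs \<subseteq> carrier G \<Longrightarrow> set ys \<subseteq> carrier G \<Longrightarrow>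
   word_prod G (xs @ ys) = word_prod G xs \<otimes> word_prod G ys"
  by (induction xs) (auto simp: word_prod_def m_assoc word_prod_closed[unfolded word_prod_def])

lemma word_prod_take_Suc:
  assumes "set xs \<subseteq> carrier G" "l < length xs"
  shows "word_prod G (take (Suc l) xs) = word_prod G (take l xs) \<otimes> xs ! l"
proof -
  have "take (Suc l) xs = take l xs @ [xs ! l]" using assms(2) by (simp add: take_Suc_conv_app_nth)
  moreover have "set (take l xs) \<subseteq> carrier G" "xs ! l \<in> carrier G"
    using assms by (auto dest: in_set_takeD)
  ultimately show ?thesis by (simp add: word_prod_append) (simp add: word_prod_def)
qed

lemma word_prod_subword:
  assumes "set xs \<subseteq> carrier G" "1 \<le> p" "p \<le> q" "q \<le> length xs"
  shows "word_prod G (subword xs p q) = inv (word_prod G (take (p - 1) xs)) \<otimes> word_prod G (take q xs)"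
proof -
  have split: "take q xs = take (p - 1) xs @ subword xs p q"
    using take_add[of "p - 1" "q + 1 - p" xs] assms(2,3) by (simp add: subword_def)
  have "set (take (p - 1) xs) \<subseteq> carrier G" "set (subword xs p q) \<subseteq> carrier G"
    using assms(1) unfolding subword_def by (auto dest: in_set_takeD in_set_dropD)
  then show ?thesis
    unfolding split by (simp add: word_prod_append word_prod_closed m_assoc[symmetric])
qed

lemma cay_walk_carrier: "cay_walk G S ws \<Longrightarrow> set ws \<subseteq> carrier G"
proof -
  assume w: "cay_walk G S ws"
  have "ws ! i \<in> carrier G" if "i < length ws" for i
    using that
  proof (induction i)
    case 0 then show ?case using w by (simp add: cay_walk_def hd_conv_nth)
  next
    case (Suc i) then show ?case using w by (simp add: cay_walk_def cay_adj_iff)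
  qed
  then show ?thesis by (auto simp: in_set_conv_nth)
qed

lemma walk_labels_closed:
  assumes "set ws \<subseteq> carrier G"
  shows "set (walk_labels G ws) \<subseteq> carrier G"
proof
  fix x assume "x \<in> set (walk_labels G ws)"
  then obtain l where "l < length ws - 1" "x = inv (ws ! l) \<otimes> ws ! Suc l"
    unfolding walk_labels_def by auto
  moreover have "ws ! l \<in> carrier G" "ws ! Suc l \<in> carrier G"
    using calculation(1) assms nth_mem[of l ws] nth_mem[of "Suc l" ws] by auto
  ultimately show "x \<in> carrier G" by simp
qed

lemma word_prod_take_walk_labels:
  assumes "set ws \<subseteq> carrier G" "l < length ws"
  shows "word_prod G (take l (walk_labels G ws)) = inv (ws ! 0) \<otimes> ws ! l"
  using assms(2)
proof (induction l)
  case 0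
  then show ?case using assms(1) by (simp add: word_prod_def subset_iff)
next
  case (Suc l)
  have c: "ws ! l \<in> carrier G" "ws ! 0 \<in> carrier G" "ws ! Suc l \<in> carrier G"
    using Suc.prems by (auto intro: subsetD[OF assms(1) nth_mem])
  have "l < length ws - 1" using Suc.prems by linarith
  then have "walk_labels G ws ! l = inv (ws ! l) \<otimes> ws ! Suc l"
    by (simp add: walk_labels_def)
  then have "word_prod G (take (Suc l) (walk_labels G ws))
      = (inv (ws ! 0) \<otimes> ws ! l) \<otimes> (inv (ws ! l) \<otimes> ws ! Suc l)"
    using Suc walk_labels_closed[OF assms(1)] by (simp add: word_prod_take_Suc)
  also have "\<dots> = inv (ws ! 0) \<otimes> ws ! Suc l"
    using c by (simp add: m_assoc[symmetric]) (simp add: m_assoc)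
  finally show ?case .
qed

lemma word_prod_walk_labels:
  assumes "set ws \<subseteq> carrier G" "ws \<noteq> []"
  shows "word_prod G (walk_labels G ws) = inv (hd ws) \<otimes> last ws"
  using word_prod_take_walk_labels[OF assms(1), of "length ws - 1"] assms
  by (simp add: walk_labels_def hd_conv_nth last_conv_nth)

lemma word_prod_subword_walk_labels:
  assumes "set ws \<subseteq> carrier G" "1 \<le> p" "p \<le> q" "q < length ws"
  shows "word_prod G (subword (walk_labels G ws) p q) = inv (ws ! (p - 1)) \<otimes> ws ! q"
proof -
  have c: "ws ! 0 \<in> carrier G" "ws ! (p - 1) \<in> carrier G" "ws ! q \<in> carrier G"
    using assms(2-4) by (auto intro: subsetD[OF assms(1) nth_mem])
  have "word_prod G (subword (walk_labels G ws) p q)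
      = inv (inv (ws ! 0) \<otimes> ws ! (p - 1)) \<otimes> (inv (ws ! 0) \<otimes> ws ! q)"
    using assms walk_labels_closed[OF assms(1)]
    by (simp add: word_prod_subword word_prod_take_walk_labels)
  also have "\<dots> = inv (ws ! (p - 1)) \<otimes> ws ! q"
    using c by (simp add: inv_mult_group m_assoc[symmetric]) (simp add: m_assoc)
  finally show ?thesis .
qed

lemma walk_labels_sym_gens:
  assumes "cay_walk G S ws"
  shows "set (walk_labels G ws) \<subseteq> sym_gens G S"
proof
  fix x assume "x \<in> set (walk_labels G ws)"
  then obtain l where "l < length ws - 1" "x = inv (ws ! l) \<otimes> ws ! Suc l"
    unfolding walk_labels_def by auto
  then show "x \<in> sym_gens G S"
    using assms unfolding cay_walk_def cay_adj_iff by auto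
qed

lemma cay_adj_sym: "cay_adj G S g h \<Longrightarrow> cay_adj G S h g"
proof -
  assume "cay_adj G S g h"
  then have "g \<in> carrier G" "h \<in> carrier G" "inv g \<otimes> h \<in> sym_gens G S"
    unfolding cay_adj_iff by auto
  moreover have "inv h \<otimes> g = inv (inv g \<otimes> h)"
    using calculation(1,2) by (simp add: inv_mult_group)
  ultimately show "cay_adj G S h g"
    unfolding cay_adj_iff using sym_gens_inv by auto
qed

lemma cay_walk_rev:
  assumes "cay_walk G S ws"
  shows "cay_walk G S (rev ws)"
  unfolding cay_walk_def
proof (intro conjI allI impI)
  show "rev ws \<noteq> []" "hd (rev ws) \<in> carrier G"
    using assms cay_walk_carrier[OF assms] by (auto simp: cay_walk_def hd_rev)
  fix i assume i: "i + 1 < length (rev ws)"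
  define j where "j = length ws - (i + 2)"
  have "j + 1 < length ws" "rev ws ! i = ws ! (j + 1)" "rev ws ! (i + 1) = ws ! j"
    using i unfolding j_def by (auto simp: rev_nth Suc_diff_Suc)
  then show "cay_adj G S (rev ws ! i) (rev ws ! (i + 1))"
    using assms cay_adj_sym unfolding cay_walk_def by metis
qed

lemma cay_walk_take: "cay_walk G S ws \<Longrightarrow> 0 < q \<Longrightarrow> cay_walk G S (take q ws)"
  unfolding cay_walk_def by auto

lemma cay_walk_drop: "cay_walk G S ws \<Longrightarrow> q < length ws \<Longrightarrow> cay_walk G S (drop q ws)"
  using cay_walk_carrier[of ws] unfolding cay_walk_def
  by (auto simp: hd_drop_conv_nth add.commute add.left_commute)

lemma hd_word_walk: "g \<in> carrier G \<Longrightarrow> hd (word_walk G g w) = g"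
  using word_walk_nth[of 0 w G g] by (simp add: hd_conv_nth word_prod_def)

lemma last_word_walk: "last (word_walk G g w) = g \<otimes> word_prod G w"
  using word_walk_nth[of "length w" w G g] by (simp add: last_conv_nth)

lemma cay_walk_word_walk:
  assumes "g \<in> carrier G" "set w \<subseteq> sym_gens G S"
  shows "cay_walk G S (word_walk G g w)"
  unfolding cay_walk_def
proof (intro conjI allI impI)
  have wc: "set w \<subseteq> carrier G" using assms(2) sym_gens_closed by blast
  fix i assume "i + 1 < length (word_walk G g w)"
  then have i: "i < length w" by simp
  have "word_prod G (take i w) \<in> carrier G" "w ! i \<in> carrier G"
    using i wc nth_mem by (auto intro: word_prod_closed dest: in_set_takeD)
  then have "word_walk G g w ! (i + 1) = word_walk G g w ! i \<otimes> w ! i"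
    using i wc assms(1) by (simp add: word_walk_nth word_prod_take_Suc m_assoc)
  moreover have "word_walk G g w ! i \<in> carrier G"
    using i assms(1) \<open>word_prod G (take i w) \<in> carrier G\<close> by (simp add: word_walk_nth)
  ultimately show "cay_adj G S (word_walk G g w ! i) (word_walk G g w ! (i + 1))"
    using i assms(2) nth_mem unfolding cay_adj_def by blast
qed (use assms hd_word_walk in \<open>auto simp: word_walk_def\<close>)

lemma strict_shortcut_rev:
  assumes "strict_shortcut G S cs i j ws"
  shows "strict_shortcut G S cs j i (rev ws)"
  unfolding strict_shortcut_def
proof (intro conjI allI impI)
  have ws: "cay_walk G S ws" "ws \<noteq> []"
    using assms by (auto simp: strict_shortcut_def cay_walk_def)
  show "cay_walk G S (rev ws)" using ws(1) by (rule cay_walk_rev)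
  show "hd (rev ws) = cs ! j" "last (rev ws) = cs ! i"
    using assms ws(2) by (auto simp: strict_shortcut_def hd_rev last_rev)
  fix l assume l: "0 < l \<and> l + 1 < length (rev ws)"
  then have "rev ws ! l = ws ! (length ws - 1 - l)" "0 < length ws - 1 - l"
      "length ws - 1 - l + 1 < length ws"
    by (auto simp: rev_nth)
  then show "rev ws ! l \<notin> set cs - {cs ! j, cs ! i}"
    using assms unfolding strict_shortcut_def by (metis insert_commute)
qed (use assms in \<open>auto simp: strict_shortcut_def cyc_dist_commute\<close>)

text \<open>Induction on the length: cut the walk at its first return to the cycle. Either the first
  piece is already a strict shortcut, or, by the triangle inequality, the rest is again shorter
  than the cycle distance of its endpoints.\<close>
lemma walk_contains_strict_shortcut:
  assumes "distinct cs" "cay_walk G S ws" "a < length cs" "b < length cs"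
    "hd ws = cs ! a" "last ws = cs ! b"
    "real (length ws - 1) < cyc_dist (length cs) a b"
  shows "\<exists>a' b' ws'. strict_shortcut G S cs a' b' ws' \<and>
           cyc_dist (length cs) a a' + real (length ws' - 1) \<le> real (length ws - 1)"
  using assms(2-)
proof (induction "length ws" arbitrary: ws a rule: less_induct)
  case less
  let ?n = "length cs"
  have "ws \<noteq> []" using less.prems by (simp add: cay_walk_def)
  have "a \<noteq> b" using less.prems(6) by auto
  then have "hd ws \<noteq> last ws" using less.prems assms(1) by (simp add: nth_eq_iff_index_eq)
  then have "length ws \<ge> 2" using \<open>ws \<noteq> []\<close> by (cases ws) (auto simp: Suc_le_eq)
  moreover have "last ws \<in> set cs" using less.prems(3,5) by simp
  ultimately obtain q where q: "0 < q" "q < length ws" "ws ! q \<in> set cs"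
    and first: "\<forall>l. 0 < l \<and> l < q \<longrightarrow> ws ! l \<notin> set cs"
    by (rule first_return)
  obtain c where c: "c < ?n" "ws ! q = cs ! c" using q(3) by (auto simp: in_set_conv_nth)
  show ?case
  proof (cases "real q < cyc_dist ?n a c")
    case True
    let ?ws' = "take (q + 1) ws"
    have "take (Suc q) ws = take q ws @ [ws ! q]" using q by (simp add: take_Suc_conv_app_nth)
    then have "last ?ws' = cs ! c" using c by simp
    moreover have "?ws' ! l \<notin> set cs" if "0 < l" "l < q" for l
      using first that by auto
    ultimately have "strict_shortcut G S cs a c ?ws'"
      unfolding strict_shortcut_def
      using less.prems c q True \<open>ws \<noteq> []\<close> cay_walk_take by auto
    then show ?thesis using q by (intro exI[of _ a] exI[of _ c] exI[of _ ?ws']) auto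
  next
    case False
    have "cyc_dist ?n a b \<le> cyc_dist ?n a c + cyc_dist ?n c b"
      using less.prems c by (intro cyc_dist_triangle) auto
    then have short: "real (length (drop q ws) - 1) < cyc_dist ?n c b"
      using False q less.prems(6) by simp
    have "length (drop q ws) < length ws" "cay_walk G S (drop q ws)"
      "hd (drop q ws) = cs ! c" "last (drop q ws) = cs ! b"
      using less.prems q c cay_walk_drop by (auto simp: hd_drop_conv_nth)
    from less.hyps[OF this(1,2) c(1) less.prems(3) this(3,4) short]
    obtain a' b' ws' where sc: "strict_shortcut G S cs a' b' ws'"
      and bound: "cyc_dist ?n c a' + real (length ws' - 1) \<le> real (length (drop q ws) - 1)"
      by blast
    have "cyc_dist ?n a a' \<le> cyc_dist ?n a c + cyc_dist ?n c a'"
      using sc less.prems c by (intro cyc_dist_triangle) (auto simp: strict_shortcut_def)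
    then show ?thesis using sc bound False q by (intro exI[of _ a'] exI[of _ b'] exI[of _ ws']) simp
  qed
qed

lemma distinct_relation_cycle:
  assumes rel: "simple_relation G S ss"
  shows "distinct (relation_cycle G ss)"
proof -
  let ?P = "\<lambda>l. word_prod G (take l ss)"
  have ssc: "set ss \<subseteq> carrier G"
    using rel sym_gens_closed unfolding simple_relation_def by blast
  have "?P a \<noteq> ?P b" if "a < b" "b < length ss" for a b
  proof
    assume "?P a = ?P b"
    moreover have "?P a \<in> carrier G" using ssc by (auto intro: word_prod_closed dest: in_set_takeD)
    ultimately have "word_prod G (subword ss (a + 1) b) = \<one>"
      using that ssc by (simp add: word_prod_subword)
    then show False using that rel unfolding simple_relation_def by auto
  qed
  then have "?P a \<noteq> ?P b" if "a \<noteq> b" "a < length ss" "b < length ss" for a b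
    using that by (metis nat_neq_iff)
  then show ?thesis
    unfolding relation_cycle_def distinct_conv_nth by auto
qed

lemma cay_cycle_relation_cycle:
  assumes rel: "simple_relation G S ss"
  shows "cay_cycle G S (relation_cycle G ss)"
proof -
  let ?n = "length ss" and ?P = "\<lambda>l. word_prod G (take l ss)"
  have n: "?n > 2" and ssS: "set ss \<subseteq> sym_gens G S"
    and relator: "word_prod G (subword ss 1 ?n) = \<one>"
    using rel unfolding simple_relation_def by auto
  have ssc: "set ss \<subseteq> carrier G" using ssS sym_gens_closed by blast
  have Pc: "?P l \<in> carrier G" for l
    using ssc by (auto intro: word_prod_closed dest: in_set_takeD)
  have "cay_adj G S (relation_cycle G ss ! i) (relation_cycle G ss ! ((i + 1) mod ?n))"
    if i: "i < ?n" for i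
  proof -
    have "?P ?n = ?P 0" using relator by (simp add: subword_def word_prod_def)
    moreover have "relation_cycle G ss ! 0 = ?P 0"
      by (rule relation_cycle_nth) (use n in linarith)
    ultimately have "relation_cycle G ss ! ((i + 1) mod ?n) = ?P (Suc i)"
      using i by (cases "i + 1 = ?n") (auto simp: relation_cycle_nth)
    also have "\<dots> = relation_cycle G ss ! i \<otimes> ss ! i"
      using i ssc by (simp add: relation_cycle_nth word_prod_take_Suc)
    finally have "relation_cycle G ss ! ((i + 1) mod ?n) = relation_cycle G ss ! i \<otimes> ss ! i" .
    moreover have "ss ! i \<in> sym_gens G S" using i ssS nth_mem by blast
    ultimately show ?thesis
      unfolding cay_adj_def using i Pc by (auto simp: relation_cycle_nth)
  qed
  then show ?thesis
    using n distinct_relation_cycle[OF rel] unfolding cay_cycle_def by auto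
qed

lemma cay_walk_cycle_walk:
  assumes cyc: "cay_cycle G S cs"
  shows "cay_walk G S (cycle_walk cs r)"
  unfolding cay_walk_def
proof (intro conjI allI impI)
  let ?n = "length cs" and ?w = "cycle_walk cs r"
  have adj: "\<And>i. i < ?n \<Longrightarrow> cay_adj G S (cs ! i) (cs ! ((i + 1) mod ?n))"
    and npos: "0 < ?n"
    using cyc unfolding cay_cycle_def by auto
  show "?w \<noteq> []" "hd ?w \<in> carrier G"
    using adj[of "r mod ?n"] npos
    by (auto simp: cycle_walk_def cay_adj_def simp del: upt_Suc simp add: upt_conv_Cons)
  fix i assume "i + 1 < length ?w"
  moreover have "(r + (i + 1)) mod ?n = ((r + i) mod ?n + 1) mod ?n"
    by (simp add: mod_Suc_eq)
  ultimately show "cay_adj G S (?w ! i) (?w ! (i + 1))"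
    using adj[of "(r + i) mod ?n"] mod_less_divisor[OF npos] by (simp add: cycle_walk_nth)
qed

lemma simple_relation_cycle_labels:
  assumes cyc: "cay_cycle G S cs"
  shows "simple_relation G S (walk_labels G (cycle_walk cs r))"
proof -
  let ?n = "length cs" and ?w = "cycle_walk cs r"
  have n: "?n \<ge> 3" and npos: "0 < ?n" and dist: "distinct cs"
    using cyc unfolding cay_cycle_def by linarith+
  have walk: "cay_walk G S ?w" using cyc by (rule cay_walk_cycle_walk)
  then have wc: "set ?w \<subseteq> carrier G" by (rule cay_walk_carrier)
  have labels: "set (walk_labels G ?w) \<subseteq> sym_gens G S"
    using walk by (rule walk_labels_sym_gens)
  have "word_prod G (subword (walk_labels G ?w) p q) = \<one> \<longleftrightarrow> p = 1 \<and> q = ?n"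
    if pq: "1 \<le> p" "p \<le> q" "q \<le> ?n" for p q
  proof -
    have "?w ! (p - 1) \<in> carrier G" "?w ! q \<in> carrier G"
      using pq wc nth_mem[of "p - 1" ?w] nth_mem[of q ?w] by auto
    then have "word_prod G (subword (walk_labels G ?w) p q) = \<one> \<longleftrightarrow> ?w ! (p - 1) = ?w ! q"
      using pq word_prod_subword_walk_labels[OF wc, of p q] inv_solve_left'[OF one_closed]
      by auto
    also have "\<dots> \<longleftrightarrow> (r + (p - 1)) mod ?n = (r + q) mod ?n"
      using pq dist mod_less_divisor[OF npos] by (simp add: cycle_walk_nth nth_eq_iff_index_eq)
    also have "\<dots> \<longleftrightarrow> p = 1 \<and> q = ?n"
      using pq by (subst mod_add_eq_mod_add_iff) auto
    finally show ?thesis .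
  qed
  then show ?thesis
    unfolding simple_relation_def using labels n by auto
qed

lemma relator_from_short_walk:
  assumes rel: "simple_relation G S ss" and walk: "cay_walk G S ws"
    and cd: "c < d" "d < length ss"
    and ends: "hd ws = relation_cycle G ss ! c" "last ws = relation_cycle G ss ! d"
    and short: "real (length ws - 1) < cyc_dist (length ss) c d"
  shows "c + 1 < d" "word_prod G (subword ss (c + 1) d) = word_prod G (walk_labels G ws)"
    "length (walk_labels G ws) \<le> d - (c + 1)"
    "int (length (walk_labels G ws)) \<le> int (length ss) - int d + int (c + 1) - 2"
proof -
  let ?n = "length ss"
  have "cyc_dist ?n c d = real (min (d - c) (?n - (d - c)))"
    using cyc_dist_mod[of "d - c" ?n c] cd by simp
  then have len: "length ws - 1 < d - c" "length ws - 1 < ?n - (d - c)"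
    using short by linarith+
  have ssc: "set ss \<subseteq> carrier G"
    using rel sym_gens_closed unfolding simple_relation_def by blast
  have "hd ws \<noteq> last ws"
    using distinct_relation_cycle[OF rel] ends cd by (simp add: nth_eq_iff_index_eq)
  then have "length ws \<ge> 2"
    using walk unfolding cay_walk_def by (cases ws) (auto simp: Suc_le_eq)
  then show "c + 1 < d" using len by linarith
  show "length (walk_labels G ws) \<le> d - (c + 1)"
    "int (length (walk_labels G ws)) \<le> int ?n - int d + int (c + 1) - 2"
    using len cd by auto
  have "word_prod G (walk_labels G ws) = inv (hd ws) \<otimes> last ws"
    using walk cay_walk_carrier by (simp add: cay_walk_def word_prod_walk_labels)
  also have "\<dots> = word_prod G (subword ss (c + 1) d)"
    using ends cd ssc by (simp add: relation_cycle_nth word_prod_subword)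
  finally show "word_prod G (subword ss (c + 1) d) = word_prod G (walk_labels G ws)" ..
qed

lemma dense_chordal_early_shortcut:
  assumes "\<epsilon> > 0" and dense: "dense_chordal G S \<epsilon> k m"
    and cyc: "cay_cycle G S cs" "k \<le> length cs"
  obtains c d ws where "strict_shortcut G S cs c d ws" "c < d" "real c < 2 * \<epsilon>"
    "length ws - 1 \<le> m"
proof -
  let ?n = "length cs"
  have n: "?n \<ge> 3" using cyc unfolding cay_cycle_def by blast
  define t where "t = (if \<epsilon> < real ?n then \<epsilon> else 0)"
  have near: "real x < 2 * \<epsilon>" if "x < ?n" "cyc_dist ?n t (real x) < \<epsilon>" for x
  proof (cases "real x < \<epsilon>")
    case False
    then have "t = \<epsilon>" using that(1) unfolding t_def by auto
    then show ?thesis using that False unfolding cyc_dist_def by (auto simp: min_def split: if_splits)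
  qed (use assms(1) in linarith)
  have t: "0 \<le> t \<and> t < real ?n" using n assms(1) unfolding t_def by auto
  from dense[unfolded dense_chordal_def, rule_format, OF conjI[OF cyc] t]
  obtain c d ws where sc: "strict_shortcut G S cs c d ws" and m: "length ws - 1 \<le> m"
    and close: "cyc_dist ?n t (real c) < \<epsilon> \<or> cyc_dist ?n t (real d) < \<epsilon>"
    by auto
  have "c < ?n" "d < ?n" using sc unfolding strict_shortcut_def by auto
  then have "real (min c d) < 2 * \<epsilon>"
    using near[of c] near[of d] close by (auto simp: min_def)
  moreover have "c \<noteq> d" using sc by (auto simp: strict_shortcut_def)
  ultimately show thesis
  proof (cases "c < d")
    case True
    then show ?thesis using that[OF sc] \<open>real (min c d) < 2 * \<epsilon>\<close> m by simp
  next
    case False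
    then show ?thesis using that[OF strict_shortcut_rev[OF sc]] \<open>real (min c d) < 2 * \<epsilon>\<close> m
      \<open>c \<noteq> d\<close> by simp
  qed
qed

lemma dense_chordal_imp_group_chordal:
  assumes "\<epsilon> > 0" and dense: "dense_chordal G S \<epsilon> k m"
  shows "group_chordal G S (nat \<lceil>2 * \<epsilon>\<rceil> + 1) k m"
  unfolding group_chordal_def
proof (intro allI impI)
  fix ss assume ss: "simple_relation G S ss \<and> k \<le> length ss"
  let ?cs = "relation_cycle G ss"
  have "cay_cycle G S ?cs" "k \<le> length ?cs" using cay_cycle_relation_cycle ss by auto
  with assms obtain c d ws where sc: "strict_shortcut G S ?cs c d ws"
    and "c < d" "real c < 2 * \<epsilon>" "length ws - 1 \<le> m"
    by (rule dense_chordal_early_shortcut)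
  have walk: "cay_walk G S ws" "hd ws = ?cs ! c" "last ws = ?cs ! d" "d < length ss"
    "real (length ws - 1) < cyc_dist (length ss) c d"
    using sc unfolding strict_shortcut_def by auto
  note rel = relator_from_short_walk[OF ss[THEN conjunct1] walk(1) \<open>c < d\<close> walk(4,2,3,5)]
  have "c + 1 \<le> nat \<lceil>2 * \<epsilon>\<rceil> + 1" using \<open>real c < 2 * \<epsilon>\<close> by linarith
  then show "\<exists>i j ss'. 1 \<le> i \<and> i \<le> nat \<lceil>2 * \<epsilon>\<rceil> + 1 \<and> i < j \<and> j \<le> length ss \<and>
      set ss' \<subseteq> sym_gens G S \<and> word_prod G (subword ss i j) = word_prod G ss' \<and>
      length ss' \<le> m \<and> length ss' \<le> j - i \<and>
      int (length ss') \<le> int (length ss) - int j + int i - 2"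
    using rel walk(4) walk_labels_sym_gens[OF walk(1)] \<open>length ws - 1 \<le> m\<close>
    by (intro exI[of _ "c + 1"] exI[of _ d] exI[of _ "walk_labels G ws"]) auto
qed

lemma short_walk_from_relator:
  assumes cyc: "cay_cycle G S cs"
    and ij: "1 \<le> i" "i < j" "j \<le> length cs"
    and ss': "set ss' \<subseteq> sym_gens G S"
      "word_prod G (subword (walk_labels G (cycle_walk cs r)) i j) = word_prod G ss'"
    and len: "length ss' \<le> j - i" "int (length ss') \<le> int (length cs) - int j + int i - 2"
    and a_def: "a = (r + (i - 1)) mod length cs" and b_def: "b = (r + j) mod length cs"
  shows "cay_walk G S (word_walk G (cs ! a) ss')" "hd (word_walk G (cs ! a) ss') = cs ! a"
    "last (word_walk G (cs ! a) ss') = cs ! b" "real (length ss') < cyc_dist (length cs) a b"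
proof -
  let ?n = "length cs" and ?w = "cycle_walk cs r"
  have npos: "0 < ?n" using cyc unfolding cay_cycle_def by auto
  have ab: "?w ! (i - 1) = cs ! a" "?w ! j = cs ! b"
    using ij unfolding a_def b_def by (simp_all add: cycle_walk_nth)
  have wc: "set ?w \<subseteq> carrier G" using cay_walk_cycle_walk cyc cay_walk_carrier by blast
  then have abc: "cs ! a \<in> carrier G" "cs ! b \<in> carrier G"
    using ab nth_mem[of "i - 1" ?w] nth_mem[of j ?w] ij by auto
  have "word_prod G ss' = inv (cs ! a) \<otimes> cs ! b"
    using ss'(2) word_prod_subword_walk_labels[OF wc, of i j] ij ab by simp
  then show "cay_walk G S (word_walk G (cs ! a) ss')" "hd (word_walk G (cs ! a) ss') = cs ! a"
    "last (word_walk G (cs ! a) ss') = cs ! b"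
    using abc ss'(1) by (auto simp: cay_walk_word_walk hd_word_walk last_word_walk m_assoc[symmetric])
  define D where "D = j - (i - 1)"
  have "length ss' + j + 2 \<le> ?n + i" using len(2) by linarith
  then have "D < ?n" "length ss' < D" "length ss' < ?n - D"
    using len(1) ij unfolding D_def by linarith+
  moreover have "b = (r + (i - 1) + D) mod ?n"
    using ij unfolding D_def b_def by (simp add: add.assoc)
  ultimately show "real (length ss') < cyc_dist ?n a b"
    unfolding a_def using cyc_dist_mod[of D ?n "r + (i - 1)"] by simp
qed

lemma group_chordal_shortcut_near_vertex:
  assumes chordal: "group_chordal G S i0 k m"
    and cyc: "cay_cycle G S cs" "k \<le> length cs" and r: "r < length cs"
  obtains a' b' ws' where "strict_shortcut G S cs a' b' ws'" "length ws' - 1 \<le> m"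
    "cyc_dist (length cs) r a' + 1 \<le> real i0 + real m"
proof -
  let ?n = "length cs"
  have dist: "distinct cs" using cyc unfolding cay_cycle_def by auto
  have rel: "simple_relation G S (walk_labels G (cycle_walk cs r))"
    using cyc simple_relation_cycle_labels by blast
  have "k \<le> length (walk_labels G (cycle_walk cs r))" using cyc by simp
  from chordal[unfolded group_chordal_def, rule_format, OF conjI[OF rel this]]
  obtain i j ss' where ij: "1 \<le> i" "i \<le> i0" "i < j" "j \<le> ?n"
    and ss': "set ss' \<subseteq> sym_gens G S"
      "word_prod G (subword (walk_labels G (cycle_walk cs r)) i j) = word_prod G ss'"
    and len: "length ss' \<le> m" "length ss' \<le> j - i" "int (length ss') \<le> int ?n - int j + int i - 2"
    by auto
  define a where "a = (r + (i - 1)) mod ?n"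
  define b where "b = (r + j) mod ?n"
  note walk = short_walk_from_relator[OF cyc(1) ij(1,3,4) ss' len(2,3) a_def b_def]
  have "0 < ?n" using r by linarith
  then have "a < ?n" "b < ?n" unfolding a_def b_def by simp_all
  moreover have "real (length (word_walk G (cs ! a) ss') - 1) < cyc_dist ?n a b"
    using walk(4) by simp
  ultimately have "\<exists>a' b' ws'. strict_shortcut G S cs a' b' ws' \<and>
      cyc_dist ?n a a' + real (length ws' - 1) \<le> real (length (word_walk G (cs ! a) ss') - 1)"
    by (rule walk_contains_strict_shortcut[OF dist walk(1) _ _ walk(2,3)])
  then obtain a' b' ws' where sc: "strict_shortcut G S cs a' b' ws'"
    and bound: "cyc_dist ?n a a' + real (length ws' - 1) \<le> real (length ss')"
    by auto
  have "a' < ?n" using sc unfolding strict_shortcut_def by blast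
  have "cyc_dist ?n r a = real (min (i - 1) (?n - (i - 1)))"
    using cyc_dist_mod[of "i - 1" ?n r] ij r unfolding a_def by simp
  moreover have "cyc_dist ?n r a' \<le> cyc_dist ?n r a + cyc_dist ?n a a'"
    using r \<open>a < ?n\<close> \<open>a' < ?n\<close> by (intro cyc_dist_triangle) simp_all
  moreover have "0 \<le> cyc_dist ?n a a'" using \<open>a < ?n\<close> \<open>a' < ?n\<close> by (intro cyc_dist_nonneg) auto
  ultimately have "length ws' - 1 \<le> m" "cyc_dist ?n r a' + 1 \<le> real i0 + real m"
    using bound len(1) ij by linarith+
  with sc show thesis by (rule that)
qed

lemma group_chordal_imp_dense_chordal:
  assumes chordal: "group_chordal G S i0 k m"
  shows "dense_chordal G S (real i0 + real m + 1) k m"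
  unfolding dense_chordal_def
proof (intro allI impI)
  fix cs t assume cyc: "cay_cycle G S cs \<and> k \<le> length cs"
    and t: "0 \<le> t \<and> t < real (length cs)"
  let ?n = "length cs"
  define r where "r = nat \<lfloor>t\<rfloor>"
  have r: "r < ?n" "\<bar>t - real r\<bar> < 1" using t unfolding r_def by linarith+
  obtain a' b' ws' where sc: "strict_shortcut G S cs a' b' ws'" and "length ws' - 1 \<le> m"
    and near: "cyc_dist ?n r a' + 1 \<le> real i0 + real m"
    using group_chordal_shortcut_near_vertex[OF chordal cyc[THEN conjunct1] cyc[THEN conjunct2] r(1)] .
  have "cyc_dist ?n t a' \<le> cyc_dist ?n t r + cyc_dist ?n r a'"
    using t r sc unfolding strict_shortcut_def by (intro cyc_dist_triangle) auto
  then have "cyc_dist ?n t a' < real i0 + real m + 1"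
    using cyc_dist_le_abs[of ?n t r] r(2) near by linarith
  with sc \<open>length ws' - 1 \<le> m\<close> show "\<exists>i j ws. strict_shortcut G S cs i j ws \<and> length ws - 1 \<le> m \<and>
      (cyc_dist ?n t (real i) < real i0 + real m + 1 \<or> cyc_dist ?n t (real j) < real i0 + real m + 1)"
    by blast
qed

end

theorem theorem9:
  fixes G :: "('a, 'b) monoid_scheme" and S :: "'a set" and k m :: nat
  assumes "group G" and "S \<subseteq> carrier G" and "finite S"
    and "generate G S = carrier G"
    and "k > 0" and "m > 0"
  shows "(\<exists>\<epsilon>::real. \<epsilon> > 0 \<and> dense_chordal G S \<epsilon> k m) \<longleftrightarrow>
         (\<exists>i0::nat. i0 > 0 \<and> group_chordal G S i0 k m)"
proof -
  have G: "cayley_graph G S"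
    using assms(1,2) by (simp add: cayley_graph_def cayley_graph_axioms_def)
  show ?thesis
  proof
    assume "\<exists>\<epsilon>::real. \<epsilon> > 0 \<and> dense_chordal G S \<epsilon> k m"
    then obtain \<epsilon> :: real where "\<epsilon> > 0" "dense_chordal G S \<epsilon> k m" by blast
    then have "group_chordal G S (nat \<lceil>2 * \<epsilon>\<rceil> + 1) k m"
      by (rule cayley_graph.dense_chordal_imp_group_chordal[OF G])
    then show "\<exists>i0::nat. i0 > 0 \<and> group_chordal G S i0 k m"
      by (intro exI[of _ "nat \<lceil>2 * \<epsilon>\<rceil> + 1"]) simp
  next
    assume "\<exists>i0::nat. i0 > 0 \<and> group_chordal G S i0 k m"
    then obtain i0 where "group_chordal G S i0 k m" by blast
    then have "dense_chordal G S (real i0 + real m + 1) k m"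
      by (rule cayley_graph.group_chordal_imp_dense_chordal[OF G])
    then show "\<exists>\<epsilon>::real. \<epsilon> > 0 \<and> dense_chordal G S \<epsilon> k m"
      by (intro exI[of _ "real i0 + real m + 1"]) simp
  qed
qed

end
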